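(* Let $\alpha\in[0,1)$. The function $g_\alpha$ attains its global maximum on $[0,1]$ at a single point $x_0\in[0,1/2]$, which is characterized as the solution of $G_\alpha(x_0)=x_0+\tfrac12$. Moreover: (1) if $\alpha>0$, $x_0$ is the only critical point of $g_\alpha$ in $[0,1]$; (2) in the two-type setting, if $\phi_i<2\log2$ then for every $p\in[0,1]^2$ with $p_i\le\bar p_i$ one has $f^{(i)}(p)<x_0(\alpha(i))$, where $x_0(\alpha(i))$ is the maximizer of $g_{\alpha(i)}$; in particular $g_{\alpha(i)}'(f^{(i)}(p))\ge0$ for all $p\in[0,\bar p_1]\times[0,\bar p_2]$.
   Context: For $\alpha\in(0,1)$ let $g_\alpha(x)=\frac{(1-\sqrt{1-4(1-\alpha)x(1-x)})^3}{8(1-\alpha)^2x^2}$ for $x\in(0,1]$ and $g_\alpha(0)=0$; let $g_0(x)=x$ for $x\le1/2$ and $g_0(x)=(1-x)^3/x^2$ for $x>1/2$. Let $G_\alpha(x)=\frac{1-\sqrt{1-4(1-\alpha)x(1-x)}}{2(1-\alpha)x}$ (with $G_\alpha(0)=1$), so $g_\alpha(x)=(1-\alpha)xG_\alpha(x)^3$. Two-type setting: $\beta_1,\beta_2>0$, $\alpha(1),\alpha(2)\in[0,1)$, $\phi_i=(1-\alpha(i))\beta_i$; for $p\in[0,1]^2$, $S(p)=\beta_1p_1+\beta_2p_2$ and $f^{(i)}(p)=(1-e^{-S(p)})\beta_ip_i/S(p)$ ($=0$ if $S(p)=0$); $\bar p_i=\sup_{x\in[0,1]}g_{\alpha(i)}(x)$.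 *)

theory Defs
  imports "HOL-Analysis.Analysis"
begin

definition GG :: "real \<Rightarrow> real \<Rightarrow> real" where
  "GG a x = (if x = 0 then 1
     else (1 - sqrt (1 - 4 * (1 - a) * x * (1 - x))) / (2 * (1 - a) * x))"

definition gg :: "real \<Rightarrow> real \<Rightarrow> real" where
  "gg a x = (if a = 0 then (if x \<le> 1/2 then x else (1 - x)^3 / x^2)
     else if x = 0 then 0
     else (1 - sqrt (1 - 4 * (1 - a) * x * (1 - x)))^3 / (8 * (1 - a)^2 * x^2))"

definition xmax :: "real \<Rightarrow> real" where
  "xmax a = (THE x. x \<in> {0..1} \<and> (\<forall>y\<in>{0..1}. gg a y \<le> gg a x))"

text \<open>Two-type setting; types are indexed by 1 and 2.\<close>
definition SS :: "(nat \<Rightarrow> real) \<Rightarrow> (nat \<Rightarrow> real) \<Rightarrow> real" where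
  "SS beta p = beta 1 * p 1 + beta 2 * p 2"

definition ff :: "(nat \<Rightarrow> real) \<Rightarrow> nat \<Rightarrow> (nat \<Rightarrow> real) \<Rightarrow> real" where
  "ff beta i p = (if SS beta p = 0 then 0
     else (1 - exp (- SS beta p)) * beta i * p i / SS beta p)"

definition pbar :: "real \<Rightarrow> real" where
  "pbar a = (SUP x\<in>{0..1}. gg a x)"

end

theory Submission
  imports Defs
begin

text \<open>Write c = 1 - \<alpha> and S = sqrt (1 - 4 c x (1 - x)). Rationalising the numerator gives
  G(x) = 2 (1 - x) / (1 + S), a root of c x G^2 - G + (1 - x) = 0, and from this
  g' = 2 c G^2 (G - x - 1/2) / S. So g rises while G(x) > x + 1/2 and falls afterwards.
  Multiplying by a conjugate, on [0, 1/2) the sign of G - x - 1/2 is that of the cubic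
  c x (x + 1/2)^2 - 2 x + 1/2, which decreases strictly from 1/2 to (c - 1)/2, while
  G < x + 1/2 beyond 1/2. Hence the unique maximiser x0 is the root of the cubic, and the
  maximum is c x0 (x0 + 1/2)^3.

  For the two-type bound, concavity of 1 - exp (-t) gives f_i(p) \<le> 1 - exp (- \<beta>_i p_i), and
  \<phi>_i < 2 ln 2 together with 2 ln 2 y (y + 1/2)^3 \<le> - ln (1 - y) on (0, 1/2] turns
  p_i \<le> c x0 (x0 + 1/2)^3 into f_i(p) < x0.\<close>

definition rad :: "real \<Rightarrow> real \<Rightarrow> real" where
  "rad c x = sqrt (1 - 4 * c * x * (1 - x))"

text \<open>\<open>G_rat (1 - a)\<close> is \<open>GG a\<close> with rationalised numerator; unlike \<open>GG\<close> it needs no case split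
  at \<open>x = 0\<close> and makes sense for \<open>a = 0\<close>.\<close>
definition G_rat :: "real \<Rightarrow> real \<Rightarrow> real" where
  "G_rat c x = 2 * (1 - x) / (1 + rad c x)"

definition g_rat :: "real \<Rightarrow> real \<Rightarrow> real" where
  "g_rat c x = c * x * (G_rat c x) ^ 3"

text \<open>Clearing the square root in \<open>G_rat c x = x + 1/2\<close> on \<open>[0, 1/2)\<close> gives \<open>crit_poly c x = 0\<close>.\<close>
definition crit_poly :: "real \<Rightarrow> real \<Rightarrow> real" where
  "crit_poly c x = c * x * (x + 1/2)^2 - 2 * x + 1/2"

lemma four_mult_le_one: "4 * (x * (1 - x)) \<le> (1::real)"
  using sum_squares_ge_zero[of "1 - 2 * x" 0] by (simp add: power2_eq_square algebra_simps)

lemma radicand_nonneg: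
  fixes c x :: real assumes "0 < c" "c \<le> 1"
  shows "0 \<le> 1 - 4 * c * x * (1 - x)"
proof (cases "x * (1 - x) \<le> 0")
  case True
  then show ?thesis using assms by (smt (verit) mult_nonneg_nonpos mult.assoc)
next
  case False
  then have "c * (x * (1 - x)) \<le> x * (1 - x)" using assms by (simp add: mult_left_le_one_le)
  then show ?thesis using four_mult_le_one[of x] by (simp add: algebra_simps)
qed

lemma radicand_pos:
  fixes c x :: real assumes "0 < c" "c \<le> 1" "c < 1 \<or> x \<noteq> 1/2"
  shows "0 < 1 - 4 * c * x * (1 - x)"
proof (cases "c < 1")
  case True
  then show ?thesis
  proof (cases "x * (1 - x) \<le> 0")
    case True
    then show ?thesis using assms by (smt (verit) mult_nonneg_nonpos mult.assoc)
  next
    case False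
    then have "c * (x * (1 - x)) < x * (1 - x)"
      using mult_strict_right_mono[of c 1 "x * (1 - x)"] \<open>c < 1\<close> by simp
    then show ?thesis using four_mult_le_one[of x] by (simp add: algebra_simps)
  qed
next
  case False
  then have "c = 1" "x \<noteq> 1/2" using assms by auto
  then have "0 < (1 - 2 * x)^2" by auto
  then show ?thesis using \<open>c = 1\<close> by (simp add: power2_eq_square algebra_simps)
qed

lemma rad_nonneg: "0 < c \<Longrightarrow> c \<le> 1 \<Longrightarrow> 0 \<le> rad c x"
  unfolding rad_def using radicand_nonneg by simp

lemma rad_pos: "0 < c \<Longrightarrow> c \<le> 1 \<Longrightarrow> c < 1 \<or> x \<noteq> 1/2 \<Longrightarrow> 0 < rad c x"
  unfolding rad_def using radicand_pos by simp

lemma rad_squared: "0 < c \<Longrightarrow> c \<le> 1 \<Longrightarrow> (rad c x)^2 = 1 - 4 * c * x * (1 - x)"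
  unfolding rad_def using radicand_nonneg by simp

lemma G_rat_pos: "0 < c \<Longrightarrow> c \<le> 1 \<Longrightarrow> x < 1 \<Longrightarrow> 0 < G_rat c x"
  using rad_nonneg[of c x] by (simp add: G_rat_def)

lemma G_rat_quadratic:
  assumes "0 < c" "c \<le> 1"
  shows "c * x * (G_rat c x)^2 = G_rat c x - (1 - x)"
proof -
  let ?s = "rad c x" and ?G = "G_rat c x"
  have s: "0 \<le> ?s" "?s^2 = 1 - 4 * c * x * (1 - x)" using rad_nonneg rad_squared assms by auto
  have G: "?G * (1 + ?s) = 2 * (1 - x)" using s by (simp add: G_rat_def)
  have "c * x * (?G * (1 + ?s))^2 = (?G - (1 - x)) * (1 + ?s)^2"
  proof -
    have "c * x * (?G * (1 + ?s))^2 = (1 - x) * (1 - ?s^2)" unfolding G s(2) by algebra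
    also have "\<dots> = (?G * (1 + ?s) - (1 - x) * (1 + ?s)) * (1 + ?s)" unfolding G by algebra
    finally show ?thesis by (simp add: algebra_simps power2_eq_square)
  qed
  then show ?thesis using s(1) by (simp add: power_mult_distrib)
qed

lemma GG_eq_G_rat:
  assumes "0 \<le> a" "a < 1"
  shows "GG a x = G_rat (1 - a) x"
proof (cases "x = 0")
  case True
  then show ?thesis by (simp add: GG_def G_rat_def rad_def)
next
  case False
  let ?s = "rad (1 - a) x"
  have s: "0 \<le> ?s" "?s^2 = 1 - 4 * (1 - a) * x * (1 - x)"
    using rad_nonneg rad_squared assms by auto
  have "(1 - ?s) * (1 + ?s) = 4 * (1 - a) * x * (1 - x)"
    using s(2) by (simp add: algebra_simps power2_eq_square)
  then have "(1 - ?s) / (2 * (1 - a) * x) = 2 * (1 - x) / (1 + ?s)"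
    using False assms s(1) by (simp add: field_simps)
  then show ?thesis using False by (simp add: GG_def G_rat_def rad_def)
qed

lemma gg_eq_g_rat:
  assumes "0 \<le> a" "a < 1"
  shows "gg a = g_rat (1 - a)"
proof
  fix x
  show "gg a x = g_rat (1 - a) x"
  proof (cases "a = 0")
    case True
    have "1 - 4 * x * (1 - x) = (1 - 2 * x)^2" by (simp add: power2_eq_square algebra_simps)
    then have "rad 1 x = \<bar>1 - 2 * x\<bar>" by (simp add: rad_def)
    show ?thesis
    proof (cases "x \<le> 1/2")
      case True
      then show ?thesis using \<open>a = 0\<close> \<open>rad 1 x = \<bar>1 - 2 * x\<bar>\<close>
        by (simp add: gg_def g_rat_def G_rat_def)
    next
      case False
      then have "G_rat 1 x = (1 - x) / x"
        using \<open>rad 1 x = \<bar>1 - 2 * x\<bar>\<close> by (simp add: G_rat_def field_simps)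
      then show ?thesis using \<open>a = 0\<close> False
        by (simp add: gg_def g_rat_def power3_eq_cube power2_eq_square)
    qed
  next
    case False
    have "(1 - S)^3 / (8 * c^2 * x^2) = c * x * ((1 - S) / (2 * c * x))^3"
      if "c \<noteq> 0" "x \<noteq> 0" for S c :: real
      using that by (simp add: power_divide field_simps power2_eq_square power3_eq_cube)
    from this[of "1 - a"] assms
    have "gg a x = (1 - a) * x * (GG a x)^3"
      using False by (cases "x = 0") (simp_all add: gg_def GG_def)
    then show ?thesis using GG_eq_G_rat[OF assms] by (simp add: g_rat_def)
  qed
qed

lemma rad_has_derivative:
  assumes "0 < 1 - 4 * c * x * (1 - x)"
  shows "(rad c has_real_derivative -2 * c * (1 - 2 * x) / rad c x) (at x)"
proof -
  have "((\<lambda>x. sqrt (1 - 4 * c * x * (1 - x))) has_real_derivative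
          inverse (sqrt (1 - 4 * c * x * (1 - x))) / 2 * (- (4 * c * (1 - x)) + 4 * c * x)) (at x)"
    using assms by (auto intro!: derivative_eq_intros simp: algebra_simps)
  moreover have "inverse (sqrt (1 - 4 * c * x * (1 - x))) / 2 * (- (4 * c * (1 - x)) + 4 * c * x)
      = -2 * c * (1 - 2 * x) / rad c x"
    using assms by (simp add: rad_def field_simps)
  ultimately show ?thesis unfolding rad_def[abs_def] by metis
qed

lemma G_rat_has_derivative:
  assumes "0 < c" "c \<le> 1" "0 < 1 - 4 * c * x * (1 - x)"
  shows "(G_rat c has_real_derivative (c * (G_rat c x)^2 - 1) / rad c x) (at x)"
proof -
  define S where "S = rad c x"
  have S: "0 < S" "S^2 = 1 - 4 * c * x * (1 - x)"
    using assms rad_squared by (auto simp: S_def rad_def)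
  have nz: "S \<noteq> 0" "1 + S \<noteq> 0" "(1 + S)^2 \<noteq> 0" using S(1) by auto
  have "((\<lambda>x. 2 * (1 - x) / (1 + rad c x)) has_real_derivative
      (-2 * (1 + S) - 2 * (1 - x) * (-2 * c * (1 - 2 * x) / S)) / ((1 + S) * (1 + S))) (at x)"
    using S(1) unfolding S_def
    by (auto intro!: derivative_eq_intros rad_has_derivative[OF assms(3)])
  moreover have "(-2 * (1 + S) - 2 * (1 - x) * (-2 * c * (1 - 2 * x) / S)) / ((1 + S) * (1 + S))
      = (c * (2 * (1 - x) / (1 + S))^2 - 1) / S"
  proof -
    have "-2 * (1 + S) * S + 4 * c * (1 - x) * (1 - 2 * x) = 4 * c * (1 - x)^2 - (1 + S)^2"
      using S(2) by algebra
    moreover have "(-2 * (1 + S) - 2 * (1 - x) * (-2 * c * (1 - 2 * x) / S)) / ((1 + S) * (1 + S))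
        = (-2 * (1 + S) * S + 4 * c * (1 - x) * (1 - 2 * x)) / (S * (1 + S)^2)"
      using nz by (simp add: field_simps power2_eq_square)
    moreover have "(4 * c * (1 - x)^2 - (1 + S)^2) / (S * (1 + S)^2)
        = (c * (2 * (1 - x) / (1 + S))^2 - 1) / S"
      using nz by (simp add: field_simps power2_eq_square)
    ultimately show ?thesis by simp
  qed
  ultimately show ?thesis unfolding G_rat_def[abs_def] S_def by simp
qed

lemma g_rat_has_derivative:
  assumes "0 < c" "c \<le> 1" "0 < 1 - 4 * c * x * (1 - x)"
  shows "(g_rat c has_real_derivative
           2 * c * (G_rat c x)^2 * (G_rat c x - (x + 1/2)) / rad c x) (at x)"
proof -
  define S G where "S = rad c x" and "G = G_rat c x"
  have "0 < S" using assms by (simp add: S_def rad_def)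
  have GS: "G * (1 + S) = 2 * (1 - x)"
    using rad_nonneg[of c x] assms by (simp add: S_def G_def G_rat_def)
  have Q: "c * x * G^2 = G - (1 - x)" using G_rat_quadratic[OF assms(1,2)] by (simp add: G_def)
  have D: "((\<lambda>x. c * x * (G_rat c x)^3) has_real_derivative
      c * G^3 + c * x * (3 * G^2 * ((c * G^2 - 1) / S))) (at x)"
    unfolding S_def G_def
    by (auto intro!: derivative_eq_intros G_rat_has_derivative[OF assms] simp: algebra_simps)
  have "c * G^3 + c * x * (3 * G^2 * ((c * G^2 - 1) / S))
      = c * G^2 * (G * S + 3 * (c * x * G^2) - 3 * x) / S"
    using \<open>0 < S\<close> by (simp add: field_simps power2_eq_square power3_eq_cube)
  also have "G * S + 3 * (c * x * G^2) - 3 * x = 2 * (G - (x + 1/2))"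
    using GS Q by (simp add: algebra_simps)
  finally have "c * G^3 + c * x * (3 * G^2 * ((c * G^2 - 1) / S))
      = 2 * c * G^2 * (G - (x + 1/2)) / S"
    by simp
  from DERIV_cong[OF D this] show ?thesis unfolding g_rat_def[abs_def] S_def G_def .
qed

lemma continuous_on_g_rat:
  assumes "0 < c" "c \<le> 1"
  shows "continuous_on A (g_rat c)"
proof -
  have "1 + rad c x \<noteq> 0" for x using rad_nonneg[of c x] assms by linarith
  then show ?thesis unfolding g_rat_def[abs_def] G_rat_def[abs_def] rad_def
    by (auto intro!: continuous_intros)
qed

lemma crit_poly_strict_antimono:
  fixes c x y :: real
  assumes "0 < c" "c \<le> 1" "0 \<le> x" "x < y" "y \<le> 1/2"
  shows "crit_poly c y < crit_poly c x"
proof -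
  have diff: "crit_poly c x - crit_poly c y = (y - x) * (2 - c * ((y + 1/2)^2 + x * (x + y + 1)))"
    unfolding crit_poly_def power2_eq_square by algebra
  have "(y + 1/2)^2 \<le> 1" using assms by (simp add: power_le_one)
  moreover have "x * (x + y + 1) \<le> x * 2" using assms by (intro mult_left_mono) auto
  ultimately have "(y + 1/2)^2 + x * (x + y + 1) < 2" using assms by linarith
  moreover have "0 \<le> (y + 1/2)^2 + x * (x + y + 1)" using assms by simp
  ultimately have "c * ((y + 1/2)^2 + x * (x + y + 1)) < 2"
    using assms mult_left_le_one_le[of "(y + 1/2)^2 + x * (x + y + 1)" c] by linarith
  then show ?thesis using diff assms by (smt (verit) mult_pos_pos)
qed

lemma crit_poly_half: "crit_poly c (1/2) = (c - 1) / 2"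
  by (simp add: crit_poly_def power2_eq_square)

lemma crit_poly_root_exists:
  assumes "0 < c" "c \<le> 1"
  shows "\<exists>x0. 0 < x0 \<and> x0 \<le> 1/2 \<and> crit_poly c x0 = 0"
proof -
  have "crit_poly c (1/2) \<le> 0" "0 \<le> crit_poly c 0"
    using assms by (simp_all add: crit_poly_half crit_poly_def)
  moreover have "continuous_on {0..1/2} (crit_poly c)"
    unfolding crit_poly_def[abs_def] by (intro continuous_intros)
  ultimately obtain x where "0 \<le> x" "x \<le> 1/2" "crit_poly c x = 0"
    using IVT2'[of "crit_poly c" "1/2" 0 0] by auto
  moreover have "x \<noteq> 0" using \<open>crit_poly c x = 0\<close> by (auto simp: crit_poly_def)
  ultimately show ?thesis by (intro exI[of _ x]) auto
qed

lemma sgn_crit_poly: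
  assumes "0 < c" "c \<le> 1" "0 \<le> x0" "x0 \<le> 1/2" "crit_poly c x0 = 0" "0 \<le> x" "x \<le> 1/2"
  shows "sgn (crit_poly c x) = sgn (x0 - x)"
  using crit_poly_strict_antimono[of c x x0] crit_poly_strict_antimono[of c x0 x] assms
  by (cases x x0 rule: linorder_cases) auto

lemma crit_root_eq_half_iff:
  assumes "0 < c" "c \<le> 1" "0 \<le> x0" "x0 \<le> 1/2" "crit_poly c x0 = 0"
  shows "x0 = 1/2 \<longleftrightarrow> c = 1"
proof
  assume "x0 = 1/2"
  with assms(5) show "c = 1" by (simp add: crit_poly_half)
next
  assume "c = 1"
  show "x0 = 1/2"
  proof (rule ccontr)
    assume "x0 \<noteq> 1/2"
    then have "crit_poly c (1/2) < crit_poly c x0"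
      using crit_poly_strict_antimono[OF assms(1-3)] assms(4) by simp
    then show False using \<open>c = 1\<close> assms(5) by (simp add: crit_poly_half)
  qed
qed

lemma G_rat_gap_eq:
  assumes "0 < c" "c \<le> 1"
  shows "G_rat c x - (x + 1/2) = ((3/2 - 3 * x) - (x + 1/2) * rad c x) / (1 + rad c x)"
  using rad_nonneg[of c x] assms by (simp add: G_rat_def field_simps)

lemma sgn_G_rat_gap_below_half:
  assumes "0 < c" "c \<le> 1" "0 \<le> x" "x < 1/2"
  shows "sgn (G_rat c x - (x + 1/2)) = sgn (crit_poly c x)"
proof -
  let ?S = "rad c x"
  have S: "0 \<le> ?S" "?S^2 = 1 - 4 * c * x * (1 - x)" using rad_nonneg rad_squared assms by auto
  have "0 \<le> (x + 1/2) * ?S" using assms S by simp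
  then have M: "0 < 3/2 - 3 * x + (x + 1/2) * ?S" using assms by linarith
  have "((3/2 - 3 * x) - (x + 1/2) * ?S) * (3/2 - 3 * x + (x + 1/2) * ?S) = 4 * (1 - x) * crit_poly c x"
    unfolding crit_poly_def using S(2) by algebra
  then have "sgn ((3/2 - 3 * x) - (x + 1/2) * ?S) * sgn (3/2 - 3 * x + (x + 1/2) * ?S)
      = sgn (4 * (1 - x)) * sgn (crit_poly c x)"
    by (metis sgn_mult)
  then have "sgn ((3/2 - 3 * x) - (x + 1/2) * ?S) = sgn (crit_poly c x)"
    using M assms by simp
  then show ?thesis using S(1) by (simp add: G_rat_gap_eq[OF assms(1,2)] sgn_divide)
qed

lemma G_rat_gap_neg_above_half:
  assumes "0 < c" "c \<le> 1" "1/2 \<le> x" "c < 1 \<or> x \<noteq> 1/2"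
  shows "G_rat c x < x + 1/2"
proof -
  let ?S = "rad c x"
  have "0 \<le> ?S" using rad_nonneg assms by auto
  have "(3/2 - 3 * x) - (x + 1/2) * ?S < 0"
  proof (cases "x = 1/2")
    case True
    have "0 < ?S" using rad_pos[OF assms(1,2,4)] .
    then show ?thesis unfolding True by simp
  next
    case False
    then have "3/2 - 3 * x < 0" using assms(3) by linarith
    moreover have "0 \<le> (x + 1/2) * ?S" using assms(3) \<open>0 \<le> ?S\<close> by simp
    ultimately show ?thesis by linarith
  qed
  then have "G_rat c x - (x + 1/2) < 0"
    unfolding G_rat_gap_eq[OF assms(1,2)] using \<open>0 \<le> ?S\<close> by (simp add: divide_neg_pos)
  then show ?thesis by simp
qed

lemma sgn_G_rat_gap:
  assumes "0 < c" "c \<le> 1" "0 \<le> x0" "x0 \<le> 1/2" "crit_poly c x0 = 0" "0 \<le> x" "x \<le> 1"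
  shows "sgn (G_rat c x - (x + 1/2)) = sgn (x0 - x)"
proof (cases "x < 1/2")
  case True
  then show ?thesis
    using sgn_G_rat_gap_below_half sgn_crit_poly assms by simp
next
  case False
  show ?thesis
  proof (cases "x = x0")
    case True
    with \<open>\<not> x < 1/2\<close> assms(4) have "x = 1/2" "x0 = 1/2" by linarith+
    then have "c = 1" using crit_root_eq_half_iff assms by blast
    then show ?thesis unfolding \<open>x = 1/2\<close> \<open>x0 = 1/2\<close> by (simp add: G_rat_def rad_def)
  next
    case False
    then have "c < 1 \<or> x \<noteq> 1/2" using crit_root_eq_half_iff[OF assms(1-5)] assms(2) by auto
    then show ?thesis using G_rat_gap_neg_above_half assms False \<open>\<not> x < 1/2\<close> by simp
  qed
qed

lemma g_rat_has_derivative_sgn: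
  assumes "0 < c" "c \<le> 1" "0 \<le> x0" "x0 \<le> 1/2" "crit_poly c x0 = 0"
    and "0 \<le> x" "x < 1" "c < 1 \<or> x \<noteq> 1/2"
  shows "\<exists>D. (g_rat c has_real_derivative D) (at x) \<and> sgn D = sgn (x0 - x)"
proof -
  have r: "0 < 1 - 4 * c * x * (1 - x)" using radicand_pos assms by blast
  then have "0 < rad c x" by (simp add: rad_def)
  moreover have "0 < G_rat c x" using G_rat_pos assms by blast
  ultimately have "sgn (2 * c * (G_rat c x)^2 * (G_rat c x - (x + 1/2)) / rad c x)
      = sgn (G_rat c x - (x + 1/2))"
    using assms(1) by (simp add: sgn_mult sgn_divide)
  also have "\<dots> = sgn (x0 - x)" using sgn_G_rat_gap assms by simp
  finally show ?thesis using g_rat_has_derivative[OF assms(1,2) r] by blast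
qed

lemma g_rat_strict_max:
  assumes "0 < c" "c \<le> 1" "0 \<le> x0" "x0 \<le> 1/2" "crit_poly c x0 = 0"
    and "0 \<le> y" "y \<le> 1" "y \<noteq> x0"
  shows "g_rat c y < g_rat c x0"
proof (cases "y < x0")
  case True
  show ?thesis
  proof (rule DERIV_pos_imp_increasing_open[OF True _ continuous_on_g_rat[OF assms(1,2)]])
    fix x assume "y < x" "x < x0"
    then show "\<exists>D. (g_rat c has_real_derivative D) (at x) \<and> 0 < D"
      using g_rat_has_derivative_sgn[OF assms(1-5), of x] assms by (auto simp: sgn_1_pos)
  qed
next
  case False
  then have "x0 < y" using assms by simp
  show ?thesis
  proof (rule DERIV_neg_imp_decreasing_open[OF \<open>x0 < y\<close> _ continuous_on_g_rat[OF assms(1,2)]])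
    fix x assume "x0 < x" "x < y"
    moreover have "c < 1 \<or> x \<noteq> 1/2"
      using crit_root_eq_half_iff[OF assms(1-5)] \<open>x0 < x\<close> assms(2) by auto
    ultimately show "\<exists>D. (g_rat c has_real_derivative D) (at x) \<and> D < 0"
      using g_rat_has_derivative_sgn[OF assms(1-5), of x] assms by (auto simp: sgn_1_neg)
  qed
qed

lemma xmax_eq_crit_root:
  assumes "0 \<le> a" "a < 1" "0 \<le> x0" "x0 \<le> 1/2" "crit_poly (1 - a) x0 = 0"
  shows "xmax a = x0"
  unfolding xmax_def
proof (rule the_equality)
  have x0: "x0 \<in> {0..1}" using assms by simp
  have less: "gg a y < gg a x0" if "y \<in> {0..1}" "y \<noteq> x0" for y
    using g_rat_strict_max[of "1 - a" x0 y] gg_eq_g_rat that assms by auto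
  then show "x0 \<in> {0..1} \<and> (\<forall>y\<in>{0..1}. gg a y \<le> gg a x0)"
    using x0 by (metis order.refl less_imp_le)
  show "x = x0" if "x \<in> {0..1} \<and> (\<forall>y\<in>{0..1}. gg a y \<le> gg a x)" for x
    using that less[of x] x0 by force
qed

lemma xmax_crit_root:
  assumes "0 \<le> a" "a < 1"
  shows "0 < xmax a" "xmax a \<le> 1/2" "crit_poly (1 - a) (xmax a) = 0"
proof -
  obtain x0 where "0 < x0" "x0 \<le> 1/2" "crit_poly (1 - a) x0 = 0"
    using crit_poly_root_exists[of "1 - a"] assms by auto
  moreover from this have "xmax a = x0" using xmax_eq_crit_root assms by simp
  ultimately show "0 < xmax a" "xmax a \<le> 1/2" "crit_poly (1 - a) (xmax a) = 0" by simp_all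
qed

lemma gg_less_gg_xmax:
  assumes "0 \<le> a" "a < 1" "y \<in> {0..1}" "y \<noteq> xmax a"
  shows "gg a y < gg a (xmax a)"
  using g_rat_strict_max[of "1 - a" "xmax a" y] xmax_crit_root[OF assms(1,2)] gg_eq_g_rat assms
  by auto

lemma gg_le_gg_xmax:
  assumes "0 \<le> a" "a < 1" "y \<in> {0..1}"
  shows "gg a y \<le> gg a (xmax a)"
  using gg_less_gg_xmax[OF assms] by (cases "y = xmax a") auto

lemma argmax_gg:
  assumes "0 \<le> a" "a < 1"
  shows "{x\<in>{0..1}. \<forall>y\<in>{0..1}. gg a y \<le> gg a x} = {xmax a}"
proof -
  have "xmax a \<in> {0..1}" using xmax_crit_root[OF assms] by simp
  then show ?thesis using gg_le_gg_xmax[OF assms] gg_less_gg_xmax[OF assms] by force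
qed

lemma sgn_GG_gap:
  assumes "0 \<le> a" "a < 1" "x \<in> {0..1}"
  shows "sgn (GG a x - (x + 1/2)) = sgn (xmax a - x)"
  using sgn_G_rat_gap[of "1 - a" "xmax a" x] xmax_crit_root[OF assms(1,2)] GG_eq_G_rat assms
  by auto

lemma GG_fixed_point_set:
  assumes "0 \<le> a" "a < 1"
  shows "{x\<in>{0..1}. GG a x = x + 1/2} = {xmax a}"
proof -
  have "GG a x = x + 1/2 \<longleftrightarrow> x = xmax a" if "x \<in> {0..1}" for x
    using sgn_GG_gap[OF assms that] by (metis sgn_0_0 eq_iff_diff_eq_0 diff_add_eq_diff_diff_swap)
  moreover have "xmax a \<in> {0..1}" using xmax_crit_root[OF assms] by simp
  ultimately show ?thesis by auto
qed

lemma gg_critical_point: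
  assumes "0 < a" "a < 1" "x \<in> {0<..<1}" "(gg a has_real_derivative 0) (at x)"
  shows "x = xmax a"
proof -
  obtain D where D: "(gg a has_real_derivative D) (at x)" and sgn: "sgn D = sgn (xmax a - x)"
    using g_rat_has_derivative_sgn[of "1 - a" "xmax a" x] xmax_crit_root[of a] gg_eq_g_rat[of a]
      assms by auto
  from D assms(4) have "D = 0" by (rule DERIV_unique)
  with sgn show ?thesis by (simp add: sgn_zero_iff)
qed

lemma gg_has_nonneg_derivative:
  assumes "0 \<le> a" "a < 1" "0 \<le> x" "x < xmax a"
  shows "\<exists>D. (gg a has_real_derivative D) (at x) \<and> 0 \<le> D"
proof -
  have "x < 1/2" using xmax_crit_root[OF assms(1,2)] assms by simp
  then obtain D where "(gg a has_real_derivative D) (at x)" "sgn D = 1"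
    using g_rat_has_derivative_sgn[of "1 - a" "xmax a" x] xmax_crit_root[of a] gg_eq_g_rat[of a]
      assms by auto
  then show ?thesis by (auto simp: sgn_1_pos)
qed

lemma pbar_eq:
  assumes "0 \<le> a" "a < 1"
  shows "pbar a = (1 - a) * xmax a * (xmax a + 1/2)^3"
proof -
  have x: "xmax a \<in> {0..1}" using xmax_crit_root[OF assms] by simp
  have "pbar a = gg a (xmax a)"
    unfolding pbar_def
    by (rule cSup_eq_maximum) (use x gg_le_gg_xmax[OF assms] in auto)
  also have "\<dots> = (1 - a) * xmax a * (GG a (xmax a))^3"
    using gg_eq_g_rat GG_eq_G_rat assms by (simp add: g_rat_def)
  also have "GG a (xmax a) = xmax a + 1/2" using GG_fixed_point_set[OF assms] x by blast
  finally show ?thesis .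
qed

lemma pbar_le_one:
  assumes "0 \<le> a" "a < 1"
  shows "pbar a \<le> 1"
proof -
  have x: "0 < xmax a" "xmax a \<le> 1/2" using xmax_crit_root[OF assms] by auto
  then have "xmax a * (xmax a + 1/2)^3 \<le> 1 * 1" by (intro mult_mono power_le_one) auto
  moreover have "0 \<le> xmax a * (xmax a + 1/2)^3" using x by simp
  ultimately have "(1 - a) * (xmax a * (xmax a + 1/2)^3) \<le> 1 * 1"
    using assms by (intro mult_mono) auto
  then show ?thesis using pbar_eq[OF assms] by (simp add: mult.assoc)
qed

lemma one_minus_exp_neg_chord:
  fixes s t :: real
  assumes "0 < t" "t \<le> s"
  shows "(1 - exp (- s)) * t / s \<le> 1 - exp (- t)"
proof -
  define l where "l = t / s"
  have l: "0 \<le> l" "l \<le> 1" using assms by (auto simp: l_def)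
  have "exp ((1 - l) *\<^sub>R 0 + l *\<^sub>R (- s)) \<le> (1 - l) * exp 0 + l * exp (- s)"
    using convex_onD[OF exp_convex l, of 0 "- s"] by simp
  moreover have "(1 - l) *\<^sub>R 0 + l *\<^sub>R (- s) = - t" using assms by (simp add: l_def)
  moreover have "(1 - exp (- s)) * t / s = l - l * exp (- s)"
    using assms by (simp add: l_def field_simps)
  ultimately show ?thesis by simp
qed

lemma ln_one_minus_bound:
  fixes y :: real
  assumes "0 < y" "y \<le> 1/2"
  shows "2 * ln 2 * y * (y + 1/2)^3 \<le> - ln (1 - y)"
proof (cases "y \<le> 3/8")
  case True
  have "(y + 1/2)^3 \<le> (7/8)^3" using True assms by (intro power_mono) auto
  then have "ln 2 * (y + 1/2)^3 \<le> 25/36 * (7/8)^3"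
    using ln2_le_25_over_36 assms by (intro mult_mono) simp_all
  then have "2 * ln 2 * (y + 1/2)^3 \<le> 1" by (simp add: power3_eq_cube)
  then have "y * (2 * ln 2 * (y + 1/2)^3) \<le> y" using assms mult_left_mono by fastforce
  moreover have "ln (1 - y) \<le> - y" using ln_le_minus_one[of "1 - y"] assms by simp
  ultimately show ?thesis by (simp add: algebra_simps)
next
  case False
  \<comment> \<open>here \<open>ln (1 - y) = ln (2 * (1 - y)) - ln 2\<close> with \<open>2 * (1 - y) \<ge> 1\<close>\<close>
  have "ln (2 * (1 - y)) \<le> 2 * (1 - y) - 1" using ln_le_minus_one[of "2 * (1 - y)"] assms by simp
  moreover have "ln (2 * (1 - y)) = ln 2 + ln (1 - y)" using assms ln_mult[of 2 "1 - y"] by simp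
  ultimately have ln_bound: "ln 2 + 2 * y - 1 \<le> - ln (1 - y)" by simp
  have "0 \<le> y^3" "0 \<le> y^2" using assms by simp_all
  then have "3 \<le> 2 * y^3 + 4 * y^2 + 7/2 * y + 2" using False by linarith
  then have "2/3 * 3 \<le> ln 2 * (2 * y^3 + 4 * y^2 + 7/2 * y + 2)"
    using ln2_ge_two_thirds by (intro mult_mono) auto
  then have "0 \<le> (1/2 - y) * (ln 2 * (2 * y^3 + 4 * y^2 + 7/2 * y + 2) - 2)" using assms by simp
  moreover have "ln 2 + 2 * y - 1 - 2 * ln 2 * y * (y + 1/2)^3
      = (1/2 - y) * (ln 2 * (2 * y^3 + 4 * y^2 + 7/2 * y + 2) - 2)"
    by algebra
  ultimately show ?thesis using ln_bound by linarith
qed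

lemma SS_ge_summand:
  assumes "beta 1 \<ge> 0" "beta 2 \<ge> 0" "p 1 \<ge> 0" "p 2 \<ge> 0" "i \<in> {1, 2}"
  shows "0 \<le> beta i * p i" "beta i * p i \<le> SS beta p"
  using assms by (auto simp: SS_def)

lemma ff_nonneg:
  assumes "beta 1 \<ge> 0" "beta 2 \<ge> 0" "p 1 \<ge> 0" "p 2 \<ge> 0" "i \<in> {1, 2}"
  shows "0 \<le> ff beta i p"
proof -
  have "0 \<le> beta i * p i" "0 \<le> SS beta p" using SS_ge_summand[OF assms] by linarith+
  then show ?thesis by (simp add: ff_def mult.assoc)
qed

lemma ff_le_one_minus_exp:
  assumes "beta 1 \<ge> 0" "beta 2 \<ge> 0" "p 1 \<ge> 0" "p 2 \<ge> 0" "i \<in> {1, 2}"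
  shows "ff beta i p \<le> 1 - exp (- (beta i * p i))"
proof (cases "beta i * p i = 0")
  case True
  then show ?thesis by (auto simp: ff_def)
next
  case False
  with SS_ge_summand[OF assms] have t: "0 < beta i * p i" "beta i * p i \<le> SS beta p"
    by linarith+
  then have "ff beta i p = (1 - exp (- SS beta p)) * (beta i * p i) / SS beta p"
    by (simp add: ff_def mult.assoc)
  also have "\<dots> \<le> 1 - exp (- (beta i * p i))" by (rule one_minus_exp_neg_chord[OF t])
  finally show ?thesis .
qed

lemma ff_less_xmax:
  assumes "beta 1 > 0" "beta 2 > 0" "p 1 \<ge> 0" "p 2 \<ge> 0" "i \<in> {1, 2}"
    and "0 \<le> a" "a < 1" "(1 - a) * beta i < 2 * ln 2" "p i \<le> pbar a"
  shows "ff beta i p < xmax a"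
proof -
  let ?x0 = "xmax a"
  have x0: "0 < ?x0" "?x0 \<le> 1/2" using xmax_crit_root[OF assms(6,7)] by auto
  have "beta i > 0" using assms by auto
  then have "beta i * p i \<le> beta i * pbar a" using assms by simp
  also have "\<dots> = ((1 - a) * beta i) * (?x0 * (?x0 + 1/2)^3)"
    unfolding pbar_eq[OF assms(6,7)] by (simp add: algebra_simps)
  also have "\<dots> < (2 * ln 2) * (?x0 * (?x0 + 1/2)^3)"
    using assms x0 by (intro mult_strict_right_mono) auto
  also have "\<dots> \<le> - ln (1 - ?x0)" using ln_one_minus_bound[OF x0] by (simp add: algebra_simps)
  finally have "exp (ln (1 - ?x0)) < exp (- (beta i * p i))" by simp
  then have "1 - exp (- (beta i * p i)) < ?x0" using x0 by simp
  then show ?thesis using ff_le_one_minus_exp[of beta p i] assms by fastforce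
qed

theorem mainTheorem14:
  shows "(\<forall>a::real. 0 \<le> a \<and> a < 1 \<longrightarrow>
            {x\<in>{0..1}. \<forall>y\<in>{0..1}. gg a y \<le> gg a x} = {xmax a}
          \<and> xmax a \<in> {0..1/2}
          \<and> {x\<in>{0..1}. GG a x = x + 1/2} = {xmax a}
          \<and> (0 < a \<longrightarrow> (\<forall>x\<in>{0<..<1}. (gg a has_real_derivative 0) (at x) \<longrightarrow> x = xmax a)))
   \<and> (\<forall>(beta::nat \<Rightarrow> real) (alpha::nat \<Rightarrow> real) (i::nat).
        beta 1 > 0 \<and> beta 2 > 0 \<and> alpha 1 \<in> {0..<1} \<and> alpha 2 \<in> {0..<1} \<and> i \<in> {1,2}
        \<and> (1 - alpha i) * beta i < 2 * ln 2 \<longrightarrow>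
          (\<forall>p::nat \<Rightarrow> real. p 1 \<in> {0..1} \<and> p 2 \<in> {0..1} \<and> p i \<le> pbar (alpha i) \<longrightarrow>
              ff beta i p < xmax (alpha i))
        \<and> (\<forall>p::nat \<Rightarrow> real. p 1 \<in> {0..pbar (alpha 1)} \<and> p 2 \<in> {0..pbar (alpha 2)} \<longrightarrow>
              (\<exists>D. (gg (alpha i) has_real_derivative D) (at (ff beta i p)) \<and> 0 \<le> D)))"
proof (intro conjI allI impI ballI)
  fix a :: real assume "0 \<le> a \<and> a < 1"
  then have a: "0 \<le> a" "a < 1" by auto
  show "{x\<in>{0..1}. \<forall>y\<in>{0..1}. gg a y \<le> gg a x} = {xmax a}" using argmax_gg[OF a] .
  show "xmax a \<in> {0..1/2}" using xmax_crit_root[OF a] by simp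
  show "{x\<in>{0..1}. GG a x = x + 1/2} = {xmax a}" using GG_fixed_point_set[OF a] .
  show "x = xmax a" if "0 < a" "x \<in> {0<..<1}" "(gg a has_real_derivative 0) (at x)" for x
    using gg_critical_point a that by blast
next
  fix beta alpha :: "nat \<Rightarrow> real" and i :: nat and p :: "nat \<Rightarrow> real"
  assume H: "beta 1 > 0 \<and> beta 2 > 0 \<and> alpha 1 \<in> {0..<1} \<and> alpha 2 \<in> {0..<1} \<and> i \<in> {1,2}
    \<and> (1 - alpha i) * beta i < 2 * ln 2"
  then have ai: "0 \<le> alpha i" "alpha i < 1" by auto
  show "ff beta i p < xmax (alpha i)" if "p 1 \<in> {0..1} \<and> p 2 \<in> {0..1} \<and> p i \<le> pbar (alpha i)"
    using ff_less_xmax[OF _ _ _ _ _ ai] H that by auto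
  assume p: "p 1 \<in> {0..pbar (alpha 1)} \<and> p 2 \<in> {0..pbar (alpha 2)}"
  then have "p 1 \<le> 1" "p 2 \<le> 1" "p i \<le> pbar (alpha i)" using H pbar_le_one by fastforce+
  then have "ff beta i p < xmax (alpha i)" using ff_less_xmax[OF _ _ _ _ _ ai] H p by auto
  then show "\<exists>D. (gg (alpha i) has_real_derivative D) (at (ff beta i p)) \<and> 0 \<le> D"
    using gg_has_nonneg_derivative[OF ai] ff_nonneg[of beta p i] H p by auto
qed

end
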